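(* Let $(\Lambda,d)$ be a finitely aligned $k$-graph and let $(\overline{\Lambda},\overline d)$ be its extension as described in the context. Then for all $\lambda,\mu\in\Lambda$, $\Lambda^{\min}(\lambda,\mu)=\overline{\Lambda}^{\min}(\lambda,\mu)$.
   Context: A $k$-graph $(\Lambda,d)$ is a countable category with a degree functor $d:\Lambda\to\mathbb{N}^k$ satisfying unique factorization; $\Lambda^0$ vertices, $r,s$ range/source, $v\Lambda^n=\{\lambda:r(\lambda)=v,d(\lambda)=n\}$; $e_i$ standard basis, $\le$ coordinatewise, $\vee,\wedge$ coordinatewise max/min. For a $k$-graph $\Gamma$ and $\lambda,\mu\in\Gamma$, $\Gamma^{\min}(\lambda,\mu)=\{(\alpha,\beta)\in\Gamma\times\Gamma:\lambda\alpha=\mu\beta,\ d(\lambda\alpha)=d(\lambda)\vee d(\mu)\}$; $\Gamma$ is finitely aligned if all these sets are finite. For $m\in(\mathbb{N}\cup\{\infty\})^k$, $\Omega_{k,m}$ has objects $\{p\in\mathbb{N}^k:p\le m\}$, morphisms $(p,q)$, $p\le q\le m$, $r(p,q)=p$, $s(p,q)=q$, $d(p,q)=q-p$. A graph morphism $x:\Omega_{k,m}\to\Lambda$ is a degree-preserving functor; $d(x)=m$, $x(a,b)=x((a,b))$, $x(a)=x(a,a)$. It is a boundary path if there is $n_x\in\mathbb{N}^k$, $n_x\le d(x)$, with $x(p)\Lambda^{e_i}=\emptyset$ whenever $p\in\mathbb{N}^k$, $n_x\le p\le d(x)$, $p_i=d(x)_i$; $\Lambda^{\le\infty}$ is the set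 of boundary paths. $\sigma^px(a,b)=x(a+p,b+p)$; $\lambda x$ is the concatenation of $\lambda$ and $x$. $V_\Lambda=\{(x;m):x\in\Lambda^{\le\infty},m\in\mathbb{N}^k,m\not\le d(x)\}$, $(x;m)\approx(y;p)$ iff $x(m\wedge d(x))=y(p\wedge d(y))$ and $m-m\wedge d(x)=p-p\wedge d(y)$; classes $[x;m]$ form $\widetilde{V_\Lambda}$. $P_\Lambda=\{(x;(m,n)):x\in\Lambda^{\le\infty},m\le n\in\mathbb{N}^k,n\not\le d(x)\}$, $(x;(m,n))\sim(y;(p,q))$ iff $x(m\wedge d(x),n\wedge d(x))=y(p\wedge d(y),q\wedge d(y))$, $m-m\wedge d(x)=p-p\wedge d(y)$, $n-m=q-p$; classes $[x;(m,n)]$ form $\widetilde{P_\Lambda}$. The extension $\overline{\Lambda}$ is the $k$-graph with objects $\Lambda^0\sqcup\widetilde{V_\Lambda}$ and morphisms $\Lambda\sqcup\widetilde{P_\Lambda}$: on $\Lambda$ everything is as in $\Lambda$; $\overline r([x;(m,n)])=x(m)$ if $m\le d(x)$, else $[x;m]$; $\overline s([x;(m,n)])=[x;n]$; identity at $[x;m]$ is $[x;(m,m)]$; $\lambda[x;(m,n)]=[\lambda\sigma^mx;(0,d(\lambda)+n-m)]$; $[x;(m,n)][y;(p,q)]=[z;(m,n+q-p)]$ with $z=x(0,n\wedge d(x))\sigma^{p\wedge d(y)}y$; degree $\overline d|_\Lambda=d$, $\overline d([x;(m,n)])=n-m$. *)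

theory Defs
  imports Main "HOL-Library.Extended_Nat" "HOL-Library.Countable_Set"
begin

text \<open>Degrees in N^k are functions 'k => nat for a finite index type 'k
  (k = CARD('k)); degrees in (N u {oo})^k are functions 'k => enat.
  A k-graph is recorded as a small category with objects, morphisms,
  range, source, composition (cmp a b = "a b" with src a = rng b),
  identities and a degree functor.\<close>

record ('o, 'm, 'k) kgraph =
  obj :: "'o set"
  mor :: "'m set"
  rng :: "'m \<Rightarrow> 'o"
  src :: "'m \<Rightarrow> 'o"
  cmp :: "'m \<Rightarrow> 'm \<Rightarrow> 'm"
  ident :: "'o \<Rightarrow> 'm"
  deg :: "'m \<Rightarrow> 'k \<Rightarrow> nat"

definition padd :: "('k \<Rightarrow> nat) \<Rightarrow> ('k \<Rightarrow> nat) \<Rightarrow> 'k \<Rightarrow> nat" where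
  "padd p q = (\<lambda>i. p i + q i)"

definition psub :: "('k \<Rightarrow> nat) \<Rightarrow> ('k \<Rightarrow> nat) \<Rightarrow> 'k \<Rightarrow> nat" where
  "psub p q = (\<lambda>i. p i - q i)"

definition ofn :: "('k \<Rightarrow> nat) \<Rightarrow> 'k \<Rightarrow> enat" where
  "ofn p = (\<lambda>i. enat (p i))"

definition ev :: "'k \<Rightarrow> 'k \<Rightarrow> nat" where
  "ev i = (\<lambda>j. if j = i then 1 else 0)"

definition is_kgraph :: "('o, 'm, 'k::finite) kgraph \<Rightarrow> bool" where
  "is_kgraph G \<longleftrightarrow>
     countable (obj G) \<and> countable (mor G) \<and>
     (\<forall>a\<in>mor G. rng G a \<in> obj G \<and> src G a \<in> obj G) \<and>
     (\<forall>v\<in>obj G. ident G v \<in> mor G \<and> rng G (ident G v) = v \<and> src G (ident G v) = v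
                 \<and> deg G (ident G v) = (\<lambda>_. 0)) \<and>
     (\<forall>a\<in>mor G. cmp G (ident G (rng G a)) a = a \<and> cmp G a (ident G (src G a)) = a) \<and>
     (\<forall>a\<in>mor G. \<forall>b\<in>mor G. src G a = rng G b \<longrightarrow>
        cmp G a b \<in> mor G \<and> rng G (cmp G a b) = rng G a \<and> src G (cmp G a b) = src G b
        \<and> deg G (cmp G a b) = padd (deg G a) (deg G b)) \<and>
     (\<forall>a\<in>mor G. \<forall>b\<in>mor G. \<forall>c\<in>mor G. src G a = rng G b \<and> src G b = rng G c \<longrightarrow>
        cmp G (cmp G a b) c = cmp G a (cmp G b c)) \<and>
     (\<forall>l\<in>mor G. \<forall>m n. deg G l = padd m n \<longrightarrow>
        (\<exists>!ab. fst ab \<in> mor G \<and> snd ab \<in> mor G \<and> src G (fst ab) = rng G (snd ab)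
               \<and> deg G (fst ab) = m \<and> deg G (snd ab) = n \<and> cmp G (fst ab) (snd ab) = l))"

definition kmin :: "('o, 'm, 'k) kgraph \<Rightarrow> 'm \<Rightarrow> 'm \<Rightarrow> ('m \<times> 'm) set" where
  "kmin G l u = {(a, b). a \<in> mor G \<and> b \<in> mor G \<and> src G l = rng G a \<and> src G u = rng G b
      \<and> cmp G l a = cmp G u b \<and> deg G (cmp G l a) = sup (deg G l) (deg G u)}"

definition finitely_aligned :: "('o, 'm, 'k) kgraph \<Rightarrow> bool" where
  "finitely_aligned G \<longleftrightarrow> (\<forall>l\<in>mor G. \<forall>u\<in>mor G. finite (kmin G l u))"

text \<open>A graph morphism x : Omega_{k,m} -> Lambda is a pair (degree m, map on
  morphisms (p,q) of Omega_{k,m}); the map is normalised to undefined outside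
  the domain so that graph morphisms are determined by their values.\<close>
type_synonym ('k, 'm) gpath = "('k \<Rightarrow> enat) \<times> (('k \<Rightarrow> nat) \<times> ('k \<Rightarrow> nat) \<Rightarrow> 'm)"

definition dg :: "('k, 'm) gpath \<Rightarrow> 'k \<Rightarrow> enat" where "dg x = fst x"
definition seg :: "('k, 'm) gpath \<Rightarrow> ('k \<Rightarrow> nat) \<Rightarrow> ('k \<Rightarrow> nat) \<Rightarrow> 'm" where
  "seg x p q = snd x (p, q)"
definition vtx :: "('o, 'm, 'k) kgraph \<Rightarrow> ('k, 'm) gpath \<Rightarrow> ('k \<Rightarrow> nat) \<Rightarrow> 'o" where
  "vtx G x p = rng G (seg x p p)"

definition is_gmor :: "('o, 'm, 'k) kgraph \<Rightarrow> ('k, 'm) gpath \<Rightarrow> bool" where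
  "is_gmor G x \<longleftrightarrow>
     (\<forall>p q. \<not> (p \<le> q \<and> ofn q \<le> dg x) \<longrightarrow> seg x p q = undefined) \<and>
     (\<forall>p q. p \<le> q \<and> ofn q \<le> dg x \<longrightarrow> seg x p q \<in> mor G \<and> deg G (seg x p q) = psub q p) \<and>
     (\<forall>p. ofn p \<le> dg x \<longrightarrow> seg x p p = ident G (vtx G x p)) \<and>
     (\<forall>p q t. p \<le> q \<and> q \<le> t \<and> ofn t \<le> dg x \<longrightarrow>
        src G (seg x p q) = rng G (seg x q t) \<and> cmp G (seg x p q) (seg x q t) = seg x p t)"

definition is_bpath :: "('o, 'm, 'k) kgraph \<Rightarrow> ('k, 'm) gpath \<Rightarrow> bool" where
  "is_bpath G x \<longleftrightarrow> is_gmor G x \<and>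
     (\<exists>nx. ofn nx \<le> dg x \<and>
        (\<forall>p i. nx \<le> p \<and> ofn p \<le> dg x \<and> enat (p i) = dg x i \<longrightarrow>
           \<not> (\<exists>l\<in>mor G. rng G l = vtx G x p \<and> deg G l = ev i)))"

definition sh :: "('k \<Rightarrow> nat) \<Rightarrow> ('k, 'm) gpath \<Rightarrow> ('k, 'm) gpath" where
  "sh p x = ((\<lambda>i. dg x i - enat (p i)),
             (\<lambda>(a, b). if a \<le> b \<and> ofn b \<le> (\<lambda>i. dg x i - enat (p i))
                       then seg x (padd a p) (padd b p) else undefined))"

definition concat :: "('o, 'm, 'k) kgraph \<Rightarrow> 'm \<Rightarrow> ('k, 'm) gpath \<Rightarrow> ('k, 'm) gpath" where
  "concat G l y = (THE z. is_gmor G z \<and> dg z = (\<lambda>i. enat (deg G l i) + dg y i)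
                      \<and> seg z (\<lambda>_. 0) (deg G l) = l \<and> sh (deg G l) z = y)"

definition mn :: "('k \<Rightarrow> nat) \<Rightarrow> ('k \<Rightarrow> enat) \<Rightarrow> 'k \<Rightarrow> nat" where
  "mn n D = (\<lambda>i. the_enat (min (enat (n i)) (D i)))"

definition Vset :: "('o, 'm, 'k) kgraph \<Rightarrow> (('k, 'm) gpath \<times> ('k \<Rightarrow> nat)) set" where
  "Vset G = {(x, m). is_bpath G x \<and> \<not> ofn m \<le> dg x}"

definition classV :: "('o, 'm, 'k) kgraph \<Rightarrow> ('k, 'm) gpath \<Rightarrow> ('k \<Rightarrow> nat)
                      \<Rightarrow> (('k, 'm) gpath \<times> ('k \<Rightarrow> nat)) set" where
  "classV G x m = {(y, p) \<in> Vset G. vtx G x (mn m (dg x)) = vtx G y (mn p (dg y))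
                     \<and> psub m (mn m (dg x)) = psub p (mn p (dg y))}"

definition Vt :: "('o, 'm, 'k) kgraph \<Rightarrow> (('k, 'm) gpath \<times> ('k \<Rightarrow> nat)) set set" where
  "Vt G = {classV G x m | x m. (x, m) \<in> Vset G}"

definition Pset :: "('o, 'm, 'k) kgraph
                    \<Rightarrow> (('k, 'm) gpath \<times> ('k \<Rightarrow> nat) \<times> ('k \<Rightarrow> nat)) set" where
  "Pset G = {(x, m, n). is_bpath G x \<and> m \<le> n \<and> \<not> ofn n \<le> dg x}"

definition classP :: "('o, 'm, 'k) kgraph \<Rightarrow> ('k, 'm) gpath \<Rightarrow> ('k \<Rightarrow> nat) \<Rightarrow> ('k \<Rightarrow> nat)
                      \<Rightarrow> (('k, 'm) gpath \<times> ('k \<Rightarrow> nat) \<times> ('k \<Rightarrow> nat)) set" where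
  "classP G x m n = {(y, p, q) \<in> Pset G.
       seg x (mn m (dg x)) (mn n (dg x)) = seg y (mn p (dg y)) (mn q (dg y))
     \<and> psub m (mn m (dg x)) = psub p (mn p (dg y))
     \<and> psub n m = psub q p}"

definition Pt :: "('o, 'm, 'k) kgraph
                  \<Rightarrow> (('k, 'm) gpath \<times> ('k \<Rightarrow> nat) \<times> ('k \<Rightarrow> nat)) set set" where
  "Pt G = {classP G x m n | x m n. (x, m, n) \<in> Pset G}"

text \<open>operations on classes are computed on a chosen representative
  (well-definedness is part of the paper's construction)\<close>
definition rep :: "'a set \<Rightarrow> 'a" where "rep C = (SOME q. q \<in> C)"

definition ext :: "('o, 'm, 'k::finite) kgraph \<Rightarrow>
   ('o + (('k, 'm) gpath \<times> ('k \<Rightarrow> nat)) set,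
    'm + (('k, 'm) gpath \<times> ('k \<Rightarrow> nat) \<times> ('k \<Rightarrow> nat)) set, 'k) kgraph" where
  "ext G = \<lparr>
     obj = Inl ` obj G \<union> Inr ` Vt G,
     mor = Inl ` mor G \<union> Inr ` Pt G,
     rng = (\<lambda>u. case u of
              Inl l \<Rightarrow> Inl (rng G l)
            | Inr C \<Rightarrow> (case rep C of (x, m, n) \<Rightarrow>
                 if ofn m \<le> dg x then Inl (vtx G x m) else Inr (classV G x m))),
     src = (\<lambda>u. case u of
              Inl l \<Rightarrow> Inl (src G l)
            | Inr C \<Rightarrow> (case rep C of (x, m, n) \<Rightarrow> Inr (classV G x n))),
     cmp = (\<lambda>u v. case (u, v) of
              (Inl a, Inl b) \<Rightarrow> Inl (cmp G a b)
            | (Inl l, Inr C) \<Rightarrow> (case rep C of (x, m, n) \<Rightarrow>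
                 Inr (classP G (concat G l (sh m x)) (\<lambda>_. 0) (psub (padd (deg G l) n) m)))
            | (Inr C, Inr D) \<Rightarrow> (case rep C of (x, m, n) \<Rightarrow> (case rep D of (y, p, q) \<Rightarrow>
                 Inr (classP G (concat G (seg x (\<lambda>_. 0) (mn n (dg x))) (sh (mn p (dg y)) y))
                        m (psub (padd n q) p))))
            | (Inr C, Inl b) \<Rightarrow> undefined),
     ident = (\<lambda>w. case w of
              Inl v \<Rightarrow> Inl (ident G v)
            | Inr V \<Rightarrow> (case rep V of (x, m) \<Rightarrow> Inr (classP G x m m))),
     deg = (\<lambda>u. case u of
              Inl l \<Rightarrow> deg G l
            | Inr C \<Rightarrow> (case rep C of (x, m, n) \<Rightarrow> psub n m)) \<rparr>"

end

theory Submission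
  imports Defs
begin

text \<open>Composing a morphism l of Lambda with a new morphism [x;(m,n)] of the extension gives
  the new morphism [z;(0,N)], where z = l sigma^m x is again a boundary path and N = d(l) + n - m
  is not below d(z). Hence no pair in the extension's Lambda-min(l,u) mixes an old and a new
  morphism. For two new ones, the common composite is [z;(0,N)] = [z';(0,N)] with
  N = d(l) v d(u), d(l) <= d(z) and d(u) <= d(z'). Equality of the classes forces
  z(0, N ^ d(z)) = z'(0, N ^ d(z')), so N ^ d(z) = N ^ d(z'). But in a coordinate i with
  d(z)_i < N_i we have d(l)_i <= d(z)_i, so N_i = d(u)_i <= d(z')_i and the i-th coordinates
  differ.\<close>

section \<open>Degrees\<close>

lemma padd_apply [simp]: "padd p q i = p i + q i"
  by (simp add: padd_def)

lemma psub_apply [simp]: "psub p q i = p i - q i"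
  by (simp add: psub_def)

lemma ofn_le_iff: "ofn p \<le> D \<longleftrightarrow> (\<forall>i. enat (p i) \<le> D i)"
  by (simp add: ofn_def le_fun_def)

lemma padd_psub: "p \<le> q \<Longrightarrow> padd p (psub q p) = q"
  by (auto simp: le_fun_def fun_eq_iff)

lemma padd_commute: "padd p q = padd q p"
  by (auto simp: fun_eq_iff)

lemma padd_zero [simp]: "padd (\<lambda>_. 0) p = p" "padd p (\<lambda>_. 0) = p"
  by (auto simp: fun_eq_iff)

lemma psub_zero [simp]: "psub p (\<lambda>_. 0) = p"
  by (auto simp: fun_eq_iff)

lemma psub_padd_cancel [simp]: "psub (padd p q) q = p"
  by (auto simp: fun_eq_iff)

lemma psub_self [simp]: "psub p p = (\<lambda>_. 0)"
  by (auto simp: fun_eq_iff)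

lemma zero_le_deg [simp]: "(\<lambda>_. 0::nat) \<le> p"
  by (auto simp: le_fun_def)

lemma ofn_zero_le [simp]: "ofn (\<lambda>_. 0) \<le> D"
  by (simp add: ofn_le_iff zero_enat_def[symmetric])

lemma ofn_mono: "p \<le> q \<Longrightarrow> ofn p \<le> ofn q"
  by (auto simp: ofn_le_iff le_fun_def ofn_def)

lemma ofn_le_trans: "p \<le> q \<Longrightarrow> ofn q \<le> D \<Longrightarrow> ofn p \<le> D"
  using ofn_mono order_trans by blast

lemma padd_mono_left: "p \<le> q \<Longrightarrow> padd p m \<le> padd q m"
  by (auto simp: le_fun_def)

lemma enat_le_diff_iff: "enat m \<le> D \<Longrightarrow> enat b \<le> D - enat m \<longleftrightarrow> enat (b + m) \<le> D"
  by (cases D) auto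

lemma enat_eq_diff_iff: "enat m \<le> D \<Longrightarrow> enat b = D - enat m \<longleftrightarrow> enat (b + m) = D"
  by (cases D) auto

lemma ofn_le_plus_iff:
  assumes "d \<le> Q"
  shows "ofn Q \<le> (\<lambda>i. enat (d i) + D i) \<longleftrightarrow> ofn (psub Q d) \<le> D"
proof -
  have "enat (Q i) \<le> enat (d i) + D i \<longleftrightarrow> enat (Q i - d i) \<le> D i" for i
    using assms by (cases "D i") (auto simp: le_fun_def)
  then show ?thesis by (simp add: ofn_le_iff)
qed

lemma ofn_sup_le_plus:
  assumes "ofn q \<le> (\<lambda>i. enat (d i) + D i)"
  shows "ofn (sup q d) \<le> (\<lambda>i. enat (d i) + D i)"
proof -
  have "enat (max (q i) (d i)) \<le> enat (d i) + D i" for i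
    using assms[unfolded ofn_le_iff, rule_format, of i] by (cases "D i") auto
  then show ?thesis by (simp add: ofn_le_iff sup_nat_def)
qed

lemma ofn_le_plus: "ofn d \<le> (\<lambda>i. enat (d i) + D i)"
  by (simp add: ofn_le_iff)

lemma enat_add_diff_cancel_left: "enat a + D - enat a = D"
  by (cases D) auto

lemma mn_zero [simp]: "mn (\<lambda>_. 0) D = (\<lambda>_. 0)"
proof -
  have "the_enat (min (enat 0) (D i)) = 0" for i by (cases "D i") auto
  then show ?thesis by (simp add: mn_def fun_eq_iff)
qed

lemma ofn_mn_le: "ofn (mn n D) \<le> D"
proof -
  have "enat (the_enat (min (enat (n i)) (D i))) \<le> D i" for i
    by (cases "D i") auto
  then show ?thesis by (simp add: ofn_le_iff mn_def)
qed

text \<open>At a coordinate where sup d1 d2 exceeds D1, D1 is finite and at least d1, so the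
  supremum is attained by d2, which D2 dominates.\<close>

lemma mn_sup_ne:
  assumes "ofn d1 \<le> D1" "ofn d2 \<le> D2" "\<not> ofn (sup d1 d2) \<le> D1"
  shows "mn (sup d1 d2) D1 \<noteq> mn (sup d1 d2) D2"
proof -
  obtain i where i: "\<not> enat (max (d1 i) (d2 i)) \<le> D1 i"
    using assms(3) by (auto simp: ofn_le_iff sup_nat_def)
  moreover obtain c where "D1 i = enat c" using i by (cases "D1 i") auto
  moreover have "enat (d1 i) \<le> D1 i" using assms(1) by (simp add: ofn_le_iff)
  ultimately have c: "D1 i = enat c" "d1 i \<le> c" "c < d2 i" by auto
  have "enat (d2 i) \<le> D2 i" using assms(2) by (simp add: ofn_le_iff)
  then have "c < the_enat (min (enat (max (d1 i) (d2 i))) (D2 i))"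
    using c(3) by (cases "D2 i") auto
  then have "mn (sup d1 d2) D1 i \<noteq> mn (sup d1 d2) D2 i"
    using c by (simp add: mn_def sup_nat_def)
  then show ?thesis by metis
qed

section \<open>Factorisation in a k-graph\<close>

locale k_graph =
  fixes G :: "('o, 'm, 'k::finite) kgraph"
  assumes is_kgraph: "is_kgraph G"
begin

lemma rng_in_obj: "a \<in> mor G \<Longrightarrow> rng G a \<in> obj G"
  and src_in_obj: "a \<in> mor G \<Longrightarrow> src G a \<in> obj G"
  using is_kgraph unfolding is_kgraph_def by blast+

lemma ident_in_mor [simp]: "v \<in> obj G \<Longrightarrow> ident G v \<in> mor G"
  and rng_ident [simp]: "v \<in> obj G \<Longrightarrow> rng G (ident G v) = v"
  and src_ident [simp]: "v \<in> obj G \<Longrightarrow> src G (ident G v) = v"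
  and deg_ident [simp]: "v \<in> obj G \<Longrightarrow> deg G (ident G v) = (\<lambda>_. 0)"
  using is_kgraph unfolding is_kgraph_def by blast+

lemma cmp_ident_left [simp]: "a \<in> mor G \<Longrightarrow> cmp G (ident G (rng G a)) a = a"
  and cmp_ident_right [simp]: "a \<in> mor G \<Longrightarrow> cmp G a (ident G (src G a)) = a"
  using is_kgraph unfolding is_kgraph_def by blast+

context
  fixes a b
  assumes a: "a \<in> mor G" and b: "b \<in> mor G" and ab: "src G a = rng G b"
begin

lemma cmp_in_mor [simp]: "cmp G a b \<in> mor G"
  and rng_cmp [simp]: "rng G (cmp G a b) = rng G a"
  and src_cmp [simp]: "src G (cmp G a b) = src G b"
  and deg_cmp [simp]: "deg G (cmp G a b) = padd (deg G a) (deg G b)"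
  using is_kgraph a b ab unfolding is_kgraph_def by blast+

end

lemma cmp_assoc:
  "\<lbrakk>a \<in> mor G; b \<in> mor G; c \<in> mor G; src G a = rng G b; src G b = rng G c\<rbrakk>
   \<Longrightarrow> cmp G (cmp G a b) c = cmp G a (cmp G b c)"
  using is_kgraph unfolding is_kgraph_def by blast

lemma factorization_exists:
  assumes "w \<in> mor G" "deg G w = padd p q"
  obtains a b where "a \<in> mor G" "b \<in> mor G" "src G a = rng G b"
    "deg G a = p" "deg G b = q" "cmp G a b = w"
  using assms is_kgraph unfolding is_kgraph_def by metis

lemma factorization_unique:
  assumes "a \<in> mor G" "b \<in> mor G" "a' \<in> mor G" "b' \<in> mor G"
    and "src G a = rng G b" "src G a' = rng G b'"
    and "deg G a = deg G a'" "deg G b = deg G b'" "cmp G a b = cmp G a' b'"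
  shows "a = a'" and "b = b'"
proof -
  have "\<exists>!ab. fst ab \<in> mor G \<and> snd ab \<in> mor G \<and> src G (fst ab) = rng G (snd ab)
      \<and> deg G (fst ab) = deg G a \<and> deg G (snd ab) = deg G b \<and> cmp G (fst ab) (snd ab) = cmp G a b"
    using is_kgraph assms unfolding is_kgraph_def by simp
  then have "(a, b) = (a', b')"
    using assms by (metis (mono_tags, lifting) fst_conv snd_conv)
  then show "a = a'" and "b = b'" by simp_all
qed

lemma deg_zero_is_ident:
  assumes c: "c \<in> mor G" "deg G c = (\<lambda>_. 0)"
  shows "c = ident G (rng G c)"
  using factorization_unique(1)[of "ident G (rng G c)" c c "ident G (src G c)"]
    c rng_in_obj src_in_obj by simp

definition factorization3 :: "'m \<Rightarrow> ('k \<Rightarrow> nat) \<Rightarrow> ('k \<Rightarrow> nat) \<Rightarrow> 'm \<Rightarrow> 'm \<Rightarrow> 'm \<Rightarrow> bool" where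
  "factorization3 w p q a c b \<longleftrightarrow>
     a \<in> mor G \<and> c \<in> mor G \<and> b \<in> mor G \<and> src G a = rng G c \<and> src G c = rng G b
     \<and> deg G a = p \<and> deg G c = psub q p \<and> deg G b = psub (deg G w) q \<and> cmp G (cmp G a c) b = w"

definition mid_factor :: "'m \<Rightarrow> ('k \<Rightarrow> nat) \<Rightarrow> ('k \<Rightarrow> nat) \<Rightarrow> 'm" where
  "mid_factor w p q = (THE c. \<exists>a b. factorization3 w p q a c b)"

lemma factorization3_unique:
  assumes "factorization3 w p q a c b" "factorization3 w p q a' c' b'"
  shows "c = c'"
proof -
  have "cmp G a c = cmp G a' c'"
    using factorization_unique(1)[of "cmp G a c" b "cmp G a' c'" b'] assms
    unfolding factorization3_def by auto
  then show ?thesis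
    using factorization_unique(2)[of a c a' c'] assms unfolding factorization3_def by auto
qed

lemma mid_factor_eq: "factorization3 w p q a c b \<Longrightarrow> mid_factor w p q = c"
  unfolding mid_factor_def by (rule the_equality) (auto dest: factorization3_unique)

lemma factorization3_exists:
  assumes w: "w \<in> mor G" and pq: "p \<le> q" "q \<le> deg G w"
  obtains a b where "factorization3 w p q a (mid_factor w p q) b"
proof -
  obtain ac b where "ac \<in> mor G" "b \<in> mor G" "src G ac = rng G b" "deg G ac = q"
    "deg G b = psub (deg G w) q" "cmp G ac b = w"
    using factorization_exists[OF w, of q "psub (deg G w) q"] padd_psub[OF pq(2)] by metis
  moreover obtain a c where "a \<in> mor G" "c \<in> mor G" "src G a = rng G c" "deg G a = p"
    "deg G c = psub q p" "cmp G a c = ac"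
    using factorization_exists[OF \<open>ac \<in> mor G\<close>, of p "psub q p"] padd_psub[OF pq(1)]
      \<open>deg G ac = q\<close> by metis
  ultimately have "factorization3 w p q a c b"
    unfolding factorization3_def by (metis src_cmp)
  then show thesis using that mid_factor_eq by metis
qed

lemma mid_factor_in_mor: "w \<in> mor G \<Longrightarrow> p \<le> q \<Longrightarrow> q \<le> deg G w \<Longrightarrow> mid_factor w p q \<in> mor G"
  and deg_mid_factor: "w \<in> mor G \<Longrightarrow> p \<le> q \<Longrightarrow> q \<le> deg G w \<Longrightarrow> deg G (mid_factor w p q) = psub q p"
  by (metis factorization3_def factorization3_exists)+

lemma mid_factor_whole: "w \<in> mor G \<Longrightarrow> mid_factor w (\<lambda>_. 0) (deg G w) = w"
  by (rule mid_factor_eq[of _ _ _ "ident G (rng G w)" _ "ident G (src G w)"])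
    (simp add: factorization3_def rng_in_obj src_in_obj)

lemma mid_factor_ident:
  "w \<in> mor G \<Longrightarrow> p \<le> deg G w \<Longrightarrow> mid_factor w p p = ident G (rng G (mid_factor w p p))"
  by (simp add: deg_zero_is_ident mid_factor_in_mor deg_mid_factor)

lemma mid_factor_cmp:
  assumes w: "w \<in> mor G" and pqt: "p \<le> q" "q \<le> t" "t \<le> deg G w"
  shows "src G (mid_factor w p q) = rng G (mid_factor w q t)"
    and "cmp G (mid_factor w p q) (mid_factor w q t) = mid_factor w p t"
proof -
  define c where "c = mid_factor w p t"
  obtain a b where f: "factorization3 w p t a c b"
    using factorization3_exists[OF w order_trans[OF pqt(1,2)] pqt(3)] unfolding c_def .
  then have "deg G c = padd (psub q p) (psub t q)"
    using pqt by (auto simp: factorization3_def le_fun_def fun_eq_iff)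
  then obtain c1 c2 where c: "c1 \<in> mor G" "c2 \<in> mor G" "src G c1 = rng G c2"
    "deg G c1 = psub q p" "deg G c2 = psub t q" "cmp G c1 c2 = c"
    using factorization_exists f unfolding factorization3_def by metis
  have a: "a \<in> mor G" "src G a = rng G c1" and b: "b \<in> mor G" "src G c2 = rng G b"
    and deg_ab: "deg G a = p" "deg G b = psub (deg G w) t" and w_eq: "cmp G (cmp G a c) b = w"
    using f c by (auto simp: factorization3_def)
  have "cmp G (cmp G a c1) (cmp G c2 b) = w" "cmp G (cmp G (cmp G a c1) c2) b = w"
    using w_eq[folded c(6)] a b c(1-3) by (simp_all add: cmp_assoc)
  then have "factorization3 w p q a c1 (cmp G c2 b)" "factorization3 w q t (cmp G a c1) c2 b"
    using a b c deg_ab pqt by (auto simp: factorization3_def le_fun_def fun_eq_iff)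
  then have "mid_factor w p q = c1" "mid_factor w q t = c2"
    using mid_factor_eq by auto
  then show "src G (mid_factor w p q) = rng G (mid_factor w q t)"
    and "cmp G (mid_factor w p q) (mid_factor w q t) = mid_factor w p t"
    using c c_def by simp_all
qed

lemma factorization3_rng_src:
  assumes "factorization3 w p q a c b"
  shows "rng G a = rng G w" and "src G b = src G w"
proof -
  have "cmp G a c \<in> mor G" "rng G (cmp G a c) = rng G a" "src G (cmp G a c) = rng G b"
    using assms by (simp_all add: factorization3_def)
  then show "rng G a = rng G w" and "src G b = src G w"
    using assms rng_cmp[of "cmp G a c" b] src_cmp[of "cmp G a c" b]
    by (simp_all add: factorization3_def)
qed

lemma mid_factor_cmp_right:
  assumes "v \<in> mor G" "e \<in> mor G" "src G v = rng G e" "p \<le> q" "q \<le> deg G v"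
  shows "mid_factor (cmp G v e) p q = mid_factor v p q"
proof -
  obtain a b where f: "factorization3 v p q a (mid_factor v p q) b"
    using factorization3_exists assms by metis
  moreover note factorization3_rng_src(2)[OF f]
  ultimately have "factorization3 (cmp G v e) p q a (mid_factor v p q) (cmp G b e)"
    using assms unfolding factorization3_def
    by (simp add: cmp_assoc[symmetric] le_fun_def fun_eq_iff)
  then show ?thesis by (rule mid_factor_eq)
qed

lemma mid_factor_cmp_left:
  assumes "l \<in> mor G" "v \<in> mor G" "src G l = rng G v" "p \<le> q" "q \<le> deg G v"
  shows "mid_factor (cmp G l v) (padd p (deg G l)) (padd q (deg G l)) = mid_factor v p q"
proof -
  obtain a b where f: "factorization3 v p q a (mid_factor v p q) b"
    using factorization3_exists assms by metis
  moreover note factorization3_rng_src(1)[OF f]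
  ultimately have "factorization3 (cmp G l v) (padd p (deg G l)) (padd q (deg G l))
      (cmp G l a) (mid_factor v p q) b"
    using assms unfolding factorization3_def
    by (simp add: cmp_assoc fun_eq_iff padd_commute)
  then show ?thesis by (rule mid_factor_eq)
qed

end

section \<open>Graph morphisms, shifts and concatenation\<close>

lemma dg_sh: "dg (sh m x) = (\<lambda>i. dg x i - enat (m i))"
  by (simp add: sh_def dg_def)

lemma seg_sh:
  "seg (sh m x) a b = (if a \<le> b \<and> ofn b \<le> dg (sh m x) then seg x (padd a m) (padd b m) else undefined)"
  by (simp add: sh_def seg_def dg_def)

lemma ofn_le_dg_sh_iff: "ofn m \<le> dg x \<Longrightarrow> ofn b \<le> dg (sh m x) \<longleftrightarrow> ofn (padd b m) \<le> dg x"
  by (simp add: ofn_le_iff dg_sh enat_le_diff_iff)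

lemma vtx_sh: "ofn p \<le> dg (sh m x) \<Longrightarrow> vtx G (sh m x) p = vtx G x (padd p m)"
  by (simp add: vtx_def seg_sh)

lemma gpath_eqI: "dg x = dg z \<Longrightarrow> (\<And>p q. seg x p q = seg z p q) \<Longrightarrow> x = z"
  by (simp add: dg_def seg_def prod_eq_iff fun_eq_iff)

context k_graph
begin

lemma gmor_seg_undefined: "is_gmor G x \<Longrightarrow> \<not> (p \<le> q \<and> ofn q \<le> dg x) \<Longrightarrow> seg x p q = undefined"
  and gmor_seg_in_mor: "is_gmor G x \<Longrightarrow> p \<le> q \<Longrightarrow> ofn q \<le> dg x \<Longrightarrow> seg x p q \<in> mor G"
  and gmor_deg_seg: "is_gmor G x \<Longrightarrow> p \<le> q \<Longrightarrow> ofn q \<le> dg x \<Longrightarrow> deg G (seg x p q) = psub q p"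
  and gmor_seg_diag: "is_gmor G x \<Longrightarrow> ofn p \<le> dg x \<Longrightarrow> seg x p p = ident G (vtx G x p)"
  unfolding is_gmor_def by auto

lemma gmor_seg_cmp:
  assumes "is_gmor G x" "p \<le> q" "q \<le> t" "ofn t \<le> dg x"
  shows "src G (seg x p q) = rng G (seg x q t)" and "cmp G (seg x p q) (seg x q t) = seg x p t"
  using assms unfolding is_gmor_def by auto

lemma gmor_src_seg: "is_gmor G x \<Longrightarrow> p \<le> q \<Longrightarrow> ofn q \<le> dg x \<Longrightarrow> src G (seg x p q) = vtx G x q"
  using gmor_seg_cmp(1)[of x p q q] unfolding vtx_def by simp

lemma gmor_rng_seg:
  assumes x: "is_gmor G x" and "p \<le> q" "ofn q \<le> dg x"
  shows "rng G (seg x p q) = vtx G x p"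
proof -
  have p: "ofn p \<le> dg x" using assms ofn_le_trans by blast
  then have "vtx G x p \<in> obj G"
    using gmor_seg_in_mor[OF x order_refl] rng_in_obj unfolding vtx_def by blast
  then show ?thesis
    using gmor_seg_cmp(1)[OF x order_refl assms(2,3)] gmor_seg_diag[OF x p] by simp
qed

lemma mid_factor_gmor_seg:
  assumes x: "is_gmor G x" and pqQ: "p \<le> q" "q \<le> Q" "ofn Q \<le> dg x"
  shows "mid_factor (seg x (\<lambda>_. 0) Q) p q = seg x p q"
proof (rule mid_factor_eq)
  have q: "ofn q \<le> dg x" using ofn_le_trans[OF pqQ(2,3)] .
  have p: "ofn p \<le> dg x" using ofn_le_trans[OF pqQ(1) q] .
  have "cmp G (cmp G (seg x (\<lambda>_. 0) p) (seg x p q)) (seg x q Q) = seg x (\<lambda>_. 0) Q"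
    using gmor_seg_cmp(2)[OF x] pqQ q by simp
  moreover have "src G (seg x (\<lambda>_. 0) p) = rng G (seg x p q)" "src G (seg x p q) = rng G (seg x q Q)"
    using gmor_seg_cmp(1)[OF x _ pqQ(1) q] gmor_seg_cmp(1)[OF x pqQ] by simp_all
  ultimately show "factorization3 (seg x (\<lambda>_. 0) Q) p q (seg x (\<lambda>_. 0) p) (seg x p q) (seg x q Q)"
    using pqQ p q unfolding factorization3_def
    by (simp add: gmor_seg_in_mor[OF x] gmor_deg_seg[OF x])
qed

lemma gmor_sh:
  assumes x: "is_gmor G x" and m: "ofn m \<le> dg x"
  shows "is_gmor G (sh m x)"
  unfolding is_gmor_def
proof (intro conjI allI impI)
  fix p q
  show "\<not> (p \<le> q \<and> ofn q \<le> dg (sh m x)) \<Longrightarrow> seg (sh m x) p q = undefined"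
    by (auto simp: seg_sh)
  assume "p \<le> q \<and> ofn q \<le> dg (sh m x)"
  then have "p \<le> q" "ofn q \<le> dg (sh m x)" by simp_all
  moreover have "padd p m \<le> padd q m" "ofn (padd q m) \<le> dg x"
    using calculation ofn_le_dg_sh_iff[OF m] padd_mono_left by simp_all
  ultimately show "seg (sh m x) p q \<in> mor G" "deg G (seg (sh m x) p q) = psub q p"
    by (simp_all add: seg_sh gmor_seg_in_mor[OF x] gmor_deg_seg[OF x] fun_eq_iff)
next
  fix p assume "ofn p \<le> dg (sh m x)"
  then show "seg (sh m x) p p = ident G (vtx G (sh m x) p)"
    using ofn_le_dg_sh_iff[OF m] by (simp add: seg_sh vtx_sh gmor_seg_diag[OF x])
next
  fix p q t assume "p \<le> q \<and> q \<le> t \<and> ofn t \<le> dg (sh m x)"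
  then have pqt: "p \<le> q" "q \<le> t" "ofn t \<le> dg (sh m x)" by simp_all
  then have "ofn q \<le> dg (sh m x)" "p \<le> t"
    using ofn_le_trans[OF pqt(2,3)] order.trans[OF pqt(1,2)] by simp_all
  moreover have "padd p m \<le> padd q m" "padd q m \<le> padd t m" "ofn (padd t m) \<le> dg x"
    using pqt ofn_le_dg_sh_iff[OF m] padd_mono_left by simp_all
  ultimately show "src G (seg (sh m x) p q) = rng G (seg (sh m x) q t)"
    and "cmp G (seg (sh m x) p q) (seg (sh m x) q t) = seg (sh m x) p t"
    using pqt gmor_seg_cmp[OF x] by (simp_all add: seg_sh)
qed

lemma bpath_sh:
  assumes x: "is_gmor G x" and m: "ofn m \<le> dg x" and bpath: "is_bpath G x"
  shows "is_bpath G (sh m x)"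
proof -
  obtain n where n: "ofn n \<le> dg x"
    and no_edge: "\<And>p i. n \<le> p \<Longrightarrow> ofn p \<le> dg x \<Longrightarrow> enat (p i) = dg x i
        \<Longrightarrow> \<not> (\<exists>e\<in>mor G. rng G e = vtx G x p \<and> deg G e = ev i)"
    using bpath unfolding is_bpath_def by blast
  show ?thesis
    unfolding is_bpath_def
  proof (intro conjI gmor_sh[OF x m] exI[of _ "psub n m"] allI impI)
    have "padd (psub n m) m \<le> sup n m" by (auto simp: le_fun_def sup_nat_def)
    moreover have "ofn (sup n m) \<le> dg x" using n m by (simp add: ofn_le_iff sup_nat_def max_def)
    ultimately show "ofn (psub n m) \<le> dg (sh m x)"
      using ofn_le_dg_sh_iff[OF m] ofn_le_trans by simp
    fix p i assume p: "psub n m \<le> p \<and> ofn p \<le> dg (sh m x) \<and> enat (p i) = dg (sh m x) i"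
    have "n \<le> padd p m" using p by (simp add: le_fun_def le_diff_conv)
    moreover have "ofn (padd p m) \<le> dg x" using p ofn_le_dg_sh_iff[OF m] by simp
    moreover have "enat (padd p m i) = dg x i"
      using p m by (auto simp: dg_sh ofn_le_iff enat_eq_diff_iff)
    ultimately show "\<not> (\<exists>e\<in>mor G. rng G e = vtx G (sh m x) p \<and> deg G e = ev i)"
      using no_edge[of "padd p m" i] vtx_sh[of p m x G] p by metis
  qed
qed

lemma bpath_of_bpath_sh:
  assumes x: "is_gmor G x" and m: "ofn m \<le> dg x" and sh_bpath: "is_bpath G (sh m x)"
  shows "is_bpath G x"
proof -
  obtain n where n: "ofn n \<le> dg (sh m x)"
    and no_edge: "\<And>p i. n \<le> p \<Longrightarrow> ofn p \<le> dg (sh m x) \<Longrightarrow> enat (p i) = dg (sh m x) i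
        \<Longrightarrow> \<not> (\<exists>e\<in>mor G. rng G e = vtx G (sh m x) p \<and> deg G e = ev i)"
    using sh_bpath unfolding is_bpath_def by blast
  show ?thesis
    unfolding is_bpath_def
  proof (intro conjI x exI[of _ "padd n m"] allI impI)
    show "ofn (padd n m) \<le> dg x" using n ofn_le_dg_sh_iff[OF m] by simp
    fix p i assume p: "padd n m \<le> p \<and> ofn p \<le> dg x \<and> enat (p i) = dg x i"
    have "m \<le> p" using p by (auto simp: le_fun_def intro: add_leD2)
    then have pm: "padd (psub p m) m = p" by (metis padd_commute padd_psub)
    have "n \<le> psub p m" using p by (simp add: le_fun_def) (metis add_leD2 le_diff_conv2)
    moreover have "ofn (psub p m) \<le> dg (sh m x)" using p pm ofn_le_dg_sh_iff[OF m] by simp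
    moreover have "enat (psub p m i) = dg (sh m x) i"
      using p by (simp add: dg_sh flip: idiff_enat_enat)
    ultimately show "\<not> (\<exists>e\<in>mor G. rng G e = vtx G x p \<and> deg G e = ev i)"
      using no_edge[of "psub p m" i] vtx_sh[of "psub p m" m x G] pm by metis
  qed
qed

definition concat_prefix :: "'m \<Rightarrow> ('k, 'm) gpath \<Rightarrow> ('k \<Rightarrow> nat) \<Rightarrow> 'm" where
  "concat_prefix l y Q = cmp G l (seg y (\<lambda>_. 0) (psub Q (deg G l)))"

text \<open>The concatenation l y, constructed explicitly: its segment (p,q) is the factor (p,q) of
  its initial segment of degree Q = q v d(l), which is l y(0, Q - d(l)).\<close>

definition concat_path :: "'m \<Rightarrow> ('k, 'm) gpath \<Rightarrow> ('k, 'm) gpath" where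
  "concat_path l y = ((\<lambda>i. enat (deg G l i) + dg y i),
     \<lambda>(p, q). if p \<le> q \<and> ofn q \<le> (\<lambda>i. enat (deg G l i) + dg y i)
              then mid_factor (concat_prefix l y (sup q (deg G l))) p q else undefined)"

lemma dg_concat_path: "dg (concat_path l y) = (\<lambda>i. enat (deg G l i) + dg y i)"
  by (simp add: concat_path_def dg_def)

lemma seg_concat_path:
  "seg (concat_path l y) p q = (if p \<le> q \<and> ofn q \<le> dg (concat_path l y)
     then mid_factor (concat_prefix l y (sup q (deg G l))) p q else undefined)"
  by (simp add: concat_path_def seg_def dg_def)

context
  fixes l and y :: "('k, 'm) gpath"
  assumes l: "l \<in> mor G" and y: "is_gmor G y" and ly: "vtx G y (\<lambda>_. 0) = src G l"
begin

lemma concat_path_dom_iff: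
  "deg G l \<le> Q \<Longrightarrow> ofn Q \<le> dg (concat_path l y) \<longleftrightarrow> ofn (psub Q (deg G l)) \<le> dg y"
  by (simp add: dg_concat_path ofn_le_plus_iff)

lemma concat_prefix_in_mor: "deg G l \<le> Q \<Longrightarrow> ofn Q \<le> dg (concat_path l y) \<Longrightarrow> concat_prefix l y Q \<in> mor G"
  and deg_concat_prefix: "deg G l \<le> Q \<Longrightarrow> ofn Q \<le> dg (concat_path l y) \<Longrightarrow> deg G (concat_prefix l y Q) = Q"
  and src_concat_prefix: "deg G l \<le> Q \<Longrightarrow> ofn Q \<le> dg (concat_path l y)
    \<Longrightarrow> src G (concat_prefix l y Q) = vtx G y (psub Q (deg G l))"
proof -
  assume Q: "deg G l \<le> Q" "ofn Q \<le> dg (concat_path l y)"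
  then have y_Q: "ofn (psub Q (deg G l)) \<le> dg y" using concat_path_dom_iff by blast
  then have "src G l = rng G (seg y (\<lambda>_. 0) (psub Q (deg G l)))"
    using gmor_rng_seg[OF y] ly by simp
  then show "concat_prefix l y Q \<in> mor G" "deg G (concat_prefix l y Q) = Q"
    "src G (concat_prefix l y Q) = vtx G y (psub Q (deg G l))"
    using l y_Q padd_psub[OF Q(1)] unfolding concat_prefix_def
    by (simp_all add: gmor_seg_in_mor[OF y] gmor_deg_seg[OF y] gmor_src_seg[OF y])
qed

lemma mid_factor_concat_prefix_mono:
  assumes Q: "deg G l \<le> Q1" "Q1 \<le> Q2" "ofn Q2 \<le> dg (concat_path l y)" and pq: "p \<le> q" "q \<le> Q1"
  shows "mid_factor (concat_prefix l y Q2) p q = mid_factor (concat_prefix l y Q1) p q"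
proof -
  define a1 a2 where "a1 = psub Q1 (deg G l)" and "a2 = psub Q2 (deg G l)"
  have a12: "a1 \<le> a2" using Q(2) unfolding a1_def a2_def by (auto simp: le_fun_def intro: diff_le_mono)
  have Q2: "deg G l \<le> Q2" using Q(1,2) by (rule order.trans)
  have a2: "ofn a2 \<le> dg y" using concat_path_dom_iff[OF Q2] Q(3) unfolding a2_def by blast
  have a1: "ofn a1 \<le> dg y" using ofn_le_trans[OF a12 a2] .
  have Q1: "ofn Q1 \<le> dg (concat_path l y)" using ofn_le_trans[OF Q(2,3)] .
  have step: "seg y a1 a2 \<in> mor G" "src G (seg y (\<lambda>_. 0) a1) = rng G (seg y a1 a2)"
    "cmp G (seg y (\<lambda>_. 0) a1) (seg y a1 a2) = seg y (\<lambda>_. 0) a2"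
    using gmor_seg_in_mor[OF y a12 a2] gmor_seg_cmp[OF y _ a12 a2] by simp_all
  have "src G l = rng G (seg y (\<lambda>_. 0) a1)" using gmor_rng_seg[OF y _ a1] ly by simp
  then have "concat_prefix l y Q2 = cmp G (concat_prefix l y Q1) (seg y a1 a2)"
    unfolding concat_prefix_def a1_def[symmetric] a2_def[symmetric]
    using l step cmp_assoc[of l "seg y (\<lambda>_. 0) a1" "seg y a1 a2"] gmor_seg_in_mor[OF y _ a1] by simp
  moreover have "src G (concat_prefix l y Q1) = rng G (seg y a1 a2)"
    using src_concat_prefix[OF Q(1) Q1] gmor_rng_seg[OF y a12 a2] unfolding a1_def by simp
  ultimately show ?thesis
    using mid_factor_cmp_right[OF concat_prefix_in_mor[OF Q(1) Q1] step(1)] pq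
      deg_concat_prefix[OF Q(1) Q1] by simp
qed

lemma seg_concat_path_eq:
  assumes "sup q (deg G l) \<le> Q" "ofn Q \<le> dg (concat_path l y)" "p \<le> q"
  shows "seg (concat_path l y) p q = mid_factor (concat_prefix l y Q) p q"
proof -
  have "q \<le> Q" "deg G l \<le> Q" using assms(1) by (simp_all add: le_sup_iff)
  then have "ofn q \<le> dg (concat_path l y)" using assms(2) ofn_le_trans by blast
  then show ?thesis
    using mid_factor_concat_prefix_mono[of "sup q (deg G l)" Q p q] assms
    by (simp add: seg_concat_path)
qed

lemma gmor_concat_path: "is_gmor G (concat_path l y)"
  unfolding is_gmor_def
proof (intro conjI allI impI)
  fix p q
  show "\<not> (p \<le> q \<and> ofn q \<le> dg (concat_path l y)) \<Longrightarrow> seg (concat_path l y) p q = undefined"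
    by (auto simp: seg_concat_path)
  assume "p \<le> q \<and> ofn q \<le> dg (concat_path l y)"
  then have pq: "p \<le> q" "ofn q \<le> dg (concat_path l y)" by simp_all
  define Q where "Q = sup q (deg G l)"
  have Q: "deg G l \<le> Q" "q \<le> Q" "ofn Q \<le> dg (concat_path l y)"
    using pq(2) ofn_sup_le_plus unfolding Q_def dg_concat_path by simp_all
  show "seg (concat_path l y) p q \<in> mor G" "deg G (seg (concat_path l y) p q) = psub q p"
    using pq Q concat_prefix_in_mor[OF Q(1,3)] deg_concat_prefix[OF Q(1,3)]
    by (simp_all add: seg_concat_path Q_def[symmetric] mid_factor_in_mor deg_mid_factor)
next
  fix p assume p: "ofn p \<le> dg (concat_path l y)"
  define Q where "Q = sup p (deg G l)"
  have Q: "deg G l \<le> Q" "p \<le> Q" "ofn Q \<le> dg (concat_path l y)"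
    using p ofn_sup_le_plus unfolding Q_def dg_concat_path by simp_all
  show "seg (concat_path l y) p p = ident G (vtx G (concat_path l y) p)"
    using p mid_factor_ident[OF concat_prefix_in_mor[OF Q(1,3)], of p] deg_concat_prefix[OF Q(1,3)] Q(2)
    by (simp add: vtx_def seg_concat_path Q_def[symmetric])
next
  fix p q t assume "p \<le> q \<and> q \<le> t \<and> ofn t \<le> dg (concat_path l y)"
  then have pqt: "p \<le> q" "q \<le> t" "ofn t \<le> dg (concat_path l y)" by simp_all
  define Q where "Q = sup t (deg G l)"
  have Q: "deg G l \<le> Q" "t \<le> Q" "ofn Q \<le> dg (concat_path l y)"
    using pqt(3) ofn_sup_le_plus unfolding Q_def dg_concat_path by simp_all
  have "sup q (deg G l) \<le> Q" using pqt(2) unfolding Q_def by (simp add: le_supI1)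
  then have "seg (concat_path l y) p q = mid_factor (concat_prefix l y Q) p q"
    "seg (concat_path l y) q t = mid_factor (concat_prefix l y Q) q t"
    "seg (concat_path l y) p t = mid_factor (concat_prefix l y Q) p t"
    using seg_concat_path_eq Q(3) pqt(1,2) order.trans[OF pqt(1,2)] unfolding Q_def by simp_all
  then show "src G (seg (concat_path l y) p q) = rng G (seg (concat_path l y) q t)"
    and "cmp G (seg (concat_path l y) p q) (seg (concat_path l y) q t) = seg (concat_path l y) p t"
    using mid_factor_cmp[OF concat_prefix_in_mor[OF Q(1,3)] pqt(1,2)] deg_concat_prefix[OF Q(1,3)] Q(2)
    by simp_all
qed

lemma concat_path_initial: "seg (concat_path l y) (\<lambda>_. 0) (deg G l) = l"
proof -
  have "concat_prefix l y (deg G l) = l"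
    using gmor_seg_diag[OF y ofn_zero_le] ly l by (simp add: concat_prefix_def)
  then show ?thesis
    using seg_concat_path_eq[of "deg G l" "deg G l" "\<lambda>_. 0"] mid_factor_whole[OF l]
    by (simp add: dg_concat_path ofn_le_plus)
qed

lemma sh_concat_path: "sh (deg G l) (concat_path l y) = y"
proof (rule gpath_eqI)
  show "dg (sh (deg G l) (concat_path l y)) = dg y"
    by (simp add: dg_sh dg_concat_path enat_add_diff_cancel_left)
  fix a b
  show "seg (sh (deg G l) (concat_path l y)) a b = seg y a b"
  proof (cases "a \<le> b \<and> ofn b \<le> dg y")
    case True
    then have ab: "a \<le> b" "ofn b \<le> dg y" by simp_all
    have dom: "ofn (padd b (deg G l)) \<le> dg (concat_path l y)"
      using concat_path_dom_iff[of "padd b (deg G l)"] ab(2) by (simp add: le_fun_def)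
    have "seg (sh (deg G l) (concat_path l y)) a b
        = seg (concat_path l y) (padd a (deg G l)) (padd b (deg G l))"
      using ab by (simp add: seg_sh dg_sh dg_concat_path enat_add_diff_cancel_left)
    also have "\<dots> = mid_factor (concat_prefix l y (padd b (deg G l))) (padd a (deg G l)) (padd b (deg G l))"
      using seg_concat_path_eq dom padd_mono_left[OF ab(1)] by (simp add: le_fun_def)
    also have "concat_prefix l y (padd b (deg G l)) = cmp G l (seg y (\<lambda>_. 0) b)"
      by (simp add: concat_prefix_def fun_eq_iff)
    also have "mid_factor \<dots> (padd a (deg G l)) (padd b (deg G l)) = mid_factor (seg y (\<lambda>_. 0) b) a b"
      using mid_factor_cmp_left[OF l gmor_seg_in_mor[OF y _ ab(2)]] gmor_rng_seg[OF y _ ab(2)]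
        gmor_deg_seg[OF y _ ab(2)] ab(1) ly by simp
    also have "\<dots> = seg y a b" using mid_factor_gmor_seg[OF y ab(1) order_refl ab(2)] .
    finally show ?thesis .
  next
    case False
    then show ?thesis
      by (auto simp: seg_sh dg_sh dg_concat_path enat_add_diff_cancel_left gmor_seg_undefined[OF y])
  qed
qed

lemma concat_path_unique:
  assumes z: "is_gmor G z" "dg z = (\<lambda>i. enat (deg G l i) + dg y i)"
    and z_l: "seg z (\<lambda>_. 0) (deg G l) = l" and z_y: "sh (deg G l) z = y"
  shows "z = concat_path l y"
proof (rule gpath_eqI)
  have dz: "dg z = dg (concat_path l y)" using z(2) by (simp add: dg_concat_path)
  then show "dg z = dg (concat_path l y)" .
  fix p q
  show "seg z p q = seg (concat_path l y) p q"
  proof (cases "p \<le> q \<and> ofn q \<le> dg z")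
    case True
    then have pq: "p \<le> q" "ofn q \<le> dg z" by simp_all
    define Q where "Q = sup q (deg G l)"
    have Q: "deg G l \<le> Q" "q \<le> Q" "ofn Q \<le> dg z"
      using pq(2) ofn_sup_le_plus unfolding Q_def z(2) by simp_all
    have "seg z (deg G l) Q = seg y (\<lambda>_. 0) (psub Q (deg G l))"
      using concat_path_dom_iff[OF Q(1)] Q(3) padd_psub[OF Q(1)]
      by (simp add: z_y[symmetric] seg_sh dz dg_sh padd_commute)
    moreover have "seg z (\<lambda>_. 0) Q = cmp G (seg z (\<lambda>_. 0) (deg G l)) (seg z (deg G l) Q)"
      using gmor_seg_cmp(2)[OF z(1) zero_le_deg Q(1,3)] by simp
    ultimately have "seg z (\<lambda>_. 0) Q = concat_prefix l y Q"
      using z_l by (simp add: concat_prefix_def)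
    then have "seg z p q = mid_factor (concat_prefix l y Q) p q"
      using mid_factor_gmor_seg[OF z(1) pq(1) Q(2,3)] by simp
    then show ?thesis using seg_concat_path_eq[of q Q p] Q(3) pq(1) dz by (simp add: Q_def)
  next
    case False
    then show ?thesis using dz by (auto simp: seg_concat_path gmor_seg_undefined[OF z(1)])
  qed
qed

lemma concat_eq_concat_path: "concat G l y = concat_path l y"
  unfolding concat_def
proof (rule the_equality)
  show "is_gmor G (concat_path l y) \<and> dg (concat_path l y) = (\<lambda>i. enat (deg G l i) + dg y i)
      \<and> seg (concat_path l y) (\<lambda>_. 0) (deg G l) = l \<and> sh (deg G l) (concat_path l y) = y"
    using gmor_concat_path dg_concat_path concat_path_initial sh_concat_path by simp
qed (use concat_path_unique in blast)

lemma gmor_concat: "is_gmor G (concat G l y)"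
  and dg_concat: "dg (concat G l y) = (\<lambda>i. enat (deg G l i) + dg y i)"
  using gmor_concat_path dg_concat_path by (simp_all add: concat_eq_concat_path)

lemma bpath_concat: "is_bpath G y \<Longrightarrow> is_bpath G (concat G l y)"
  using bpath_of_bpath_sh[OF gmor_concat, of "deg G l"] sh_concat_path
  by (simp add: concat_eq_concat_path dg_concat_path ofn_le_plus)

end

end

section \<open>Morphisms of the extension\<close>

lemma classP_refl: "(x, m, n) \<in> Pset G \<Longrightarrow> (x, m, n) \<in> classP G x m n"
  by (simp add: classP_def)

lemma rep_in_classP:
  assumes "(x, m, n) \<in> Pset G"
  shows "rep (classP G x m n) \<in> classP G x m n"
  unfolding rep_def by (rule someI[of "\<lambda>q. q \<in> classP G x m n"]) (rule classP_refl[OF assms])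

lemma rep_in_Pt: "C \<in> Pt G \<Longrightarrow> rep C \<in> C"
  unfolding Pt_def using rep_in_classP by blast

lemma Pt_subset_Pset: "C \<in> Pt G \<Longrightarrow> C \<subseteq> Pset G"
  unfolding Pt_def classP_def by blast

lemma deg_ext_classP: "(x, m, n) \<in> Pset G \<Longrightarrow> deg (ext G) (Inr (classP G x m n)) = psub n m"
  using rep_in_classP[of x m n G] by (auto simp: ext_def classP_def split: prod.split)

lemma mor_ext: "mor (ext G) = Inl ` mor G \<union> Inr ` Pt G"
  and rng_ext_Inl [simp]: "rng (ext G) (Inl a) = Inl (rng G a)"
  and src_ext_Inl [simp]: "src (ext G) (Inl a) = Inl (src G a)"
  and cmp_ext_Inl_Inl [simp]: "cmp (ext G) (Inl a) (Inl b) = Inl (cmp G a b)"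
  and deg_ext_Inl [simp]: "deg (ext G) (Inl a) = deg G a"
  by (simp_all add: ext_def)

lemma cmp_ext_Inl_Inr_neq_Inl [simp]:
  "cmp (ext G) (Inl l) (Inr C) \<noteq> Inl a" "Inl a \<noteq> cmp (ext G) (Inl l) (Inr C)"
  by (simp_all add: ext_def split: prod.split)

lemma Inl_pair_in_kmin_ext_iff:
  "(Inl a, Inl b) \<in> kmin (ext G) (Inl l) (Inl u) \<longleftrightarrow> (a, b) \<in> kmin G l u"
  by (auto simp: kmin_def mor_ext)

context k_graph
begin

lemma cmp_ext_Inl_InrE:
  assumes l: "l \<in> mor G" and C: "C \<in> Pt G" and rng_C: "rng (ext G) (Inr C) = Inl (src G l)"
  obtains z N where "cmp (ext G) (Inl l) (Inr C) = Inr (classP G z (\<lambda>_. 0) N)"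
    and "(z, \<lambda>_. 0, N) \<in> Pset G" and "ofn (deg G l) \<le> dg z"
proof -
  obtain x m n where rep_C: "rep C = (x, m, n)" by (cases "rep C") auto
  have "(x, m, n) \<in> Pset G"
    using rep_in_Pt[OF C] Pt_subset_Pset[OF C] rep_C by auto
  then have x: "is_bpath G x" "m \<le> n" "\<not> ofn n \<le> dg x" by (simp_all add: Pset_def)
  have m: "ofn m \<le> dg x" "vtx G x m = src G l"
    using rng_C rep_C by (simp_all add: ext_def split: if_splits)
  define z where "z = concat G l (sh m x)"
  have x_gmor: "is_gmor G x" using x(1) by (simp add: is_bpath_def)
  have y: "is_gmor G (sh m x)" "is_bpath G (sh m x)" "vtx G (sh m x) (\<lambda>_. 0) = src G l"
    using gmor_sh[OF x_gmor m(1)] bpath_sh[OF x_gmor m(1) x(1)] vtx_sh[of "\<lambda>_. 0" m x G] m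
    by simp_all
  have dg_z: "dg z = (\<lambda>i. enat (deg G l i) + (dg x i - enat (m i)))"
    using dg_concat[OF l y(1,3)] unfolding z_def dg_sh .
  define N where "N = psub (padd (deg G l) n) m"
  have "\<not> ofn N \<le> dg z"
  proof
    assume N: "ofn N \<le> dg z"
    obtain i where i: "\<not> enat (n i) \<le> dg x i" using x(3) by (auto simp: ofn_le_iff)
    have "enat (m i) \<le> dg x i" using m(1) by (simp add: ofn_le_iff)
    moreover have "m i \<le> n i" using x(2) by (simp add: le_fun_def)
    moreover have "enat (deg G l i + n i - m i) \<le> enat (deg G l i) + (dg x i - enat (m i))"
      using N dg_z by (simp add: ofn_le_iff N_def)
    ultimately show False using i by (cases "dg x i") auto
  qed
  then have "(z, \<lambda>_. 0, N) \<in> Pset G"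
    using bpath_concat[OF l y(1,3) y(2)] by (simp add: Pset_def z_def)
  moreover have "cmp (ext G) (Inl l) (Inr C) = Inr (classP G z (\<lambda>_. 0) N)"
    using rep_C by (simp add: ext_def z_def N_def)
  ultimately show thesis using that dg_z by (simp add: ofn_le_plus)
qed

lemma Inr_pair_notin_kmin_ext:
  assumes l: "l \<in> mor G" and u: "u \<in> mor G"
  shows "(Inr C, Inr D) \<notin> kmin (ext G) (Inl l) (Inl u)"
proof
  assume "(Inr C, Inr D) \<in> kmin (ext G) (Inl l) (Inl u)"
  then have C: "C \<in> Pt G" "rng (ext G) (Inr C) = Inl (src G l)"
    and D: "D \<in> Pt G" "rng (ext G) (Inr D) = Inl (src G u)"
    and cmp_eq: "cmp (ext G) (Inl l) (Inr C) = cmp (ext G) (Inl u) (Inr D)"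
    and deg_eq: "deg (ext G) (cmp (ext G) (Inl l) (Inr C)) = sup (deg G l) (deg G u)"
    by (auto simp: kmin_def mor_ext)
  obtain z N where z: "cmp (ext G) (Inl l) (Inr C) = Inr (classP G z (\<lambda>_. 0) N)"
    "(z, \<lambda>_. 0, N) \<in> Pset G" "ofn (deg G l) \<le> dg z"
    using cmp_ext_Inl_InrE[OF l C] .
  obtain z' N' where z': "cmp (ext G) (Inl u) (Inr D) = Inr (classP G z' (\<lambda>_. 0) N')"
    "(z', \<lambda>_. 0, N') \<in> Pset G" "ofn (deg G u) \<le> dg z'"
    using cmp_ext_Inl_InrE[OF u D] .
  have "(z', \<lambda>_. 0, N') \<in> classP G z (\<lambda>_. 0) N"
    using cmp_eq z(1) z'(1) classP_refl[OF z'(2)] by simp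
  then have seg_eq: "seg z (\<lambda>_. 0) (mn N (dg z)) = seg z' (\<lambda>_. 0) (mn N (dg z'))"
    by (auto simp: classP_def)
  have N: "N = sup (deg G l) (deg G u)"
    using deg_eq z(1) deg_ext_classP[OF z(2)] by simp
  have "is_gmor G z" "is_gmor G z'" "\<not> ofn N \<le> dg z"
    using z(2) z'(2) by (simp_all add: Pset_def is_bpath_def)
  then have "deg G (seg z (\<lambda>_. 0) (mn N (dg z))) = mn N (dg z)"
    "deg G (seg z' (\<lambda>_. 0) (mn N (dg z'))) = mn N (dg z')"
    using gmor_deg_seg[OF _ zero_le_deg ofn_mn_le] by simp_all
  then have "mn N (dg z) = mn N (dg z')" using seg_eq by simp
  then show False
    using mn_sup_ne[OF z(3) z'(3)] \<open>\<not> ofn N \<le> dg z\<close> N by simp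
qed

end

theorem lemma3p25:
  fixes G :: "('o, 'm, 'k::finite) kgraph" and l u :: 'm
  assumes "is_kgraph G" and "finitely_aligned G"
    and "l \<in> mor G" and "u \<in> mor G"
  shows "kmin (ext G) (Inl l) (Inl u) = map_prod Inl Inl ` kmin G l u"
proof -
  interpret k_graph G by (rule k_graph.intro) fact
  have "(a, b) \<in> kmin (ext G) (Inl l) (Inl u) \<longleftrightarrow> (a, b) \<in> map_prod Inl Inl ` kmin G l u" for a b
  proof (cases a; cases b)
    fix a' b' assume "a = Inl a'" "b = Inl b'"
    then show ?thesis using Inl_pair_in_kmin_ext_iff[of a' b' G l u] by force
  next
    fix C D assume "a = Inr C" "b = Inr D"
    then show ?thesis using Inr_pair_notin_kmin_ext assms(3,4) by auto
  qed (auto simp: kmin_def)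
  then show ?thesis by (simp add: set_eq_iff split_paired_all)
qed

end
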